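(* Let $\bm S\in\mathcal{S}^N$ with eigendecomposition $\bm S=\bm Q\bm\Lambda\bm Q^T$, $\bm Q\in{\rm O}(N)$, $\bm\Lambda\in\mathcal{D}_N$ with non-increasing diagonal entries. Let $\bm\Lambda_o\in\mathcal{D}_N$ have non-increasing diagonal entries, let $0\le\epsilon<\infty$, and let $\mathcal{M}_\epsilon:=\{\bm V(\bm\Lambda_o+\bm\Lambda_\epsilon)\bm V^T:\ \bm V\in{\rm O}(N),\ \bm\Lambda_\epsilon\in\mathcal{D}_N,\ \Vert\bm\Lambda_\epsilon\Vert_2\le\epsilon\}$. Let $$\bm\Lambda_\epsilon^*:=\arg\min_{\bm\Lambda_\epsilon\in\mathcal{D}_N,\ \Vert\bm\Lambda_\epsilon\Vert_2\le\epsilon}\Vert\bm\Lambda-\bm\Lambda_o-\bm\Lambda_\epsilon\Vert_{\rm F}.$$ Then $\bm Q(\bm\Lambda_o+\bm\Lambda_\epsilon^* )\bm Q^T$ is a best approximant of $\bm S$ in $\mathcal{M}_\epsilon$ in the Frobenius norm, i.e., it belongs to $\mathcal{M}_\epsilon$ and minimizes $\Vert\bm S-\bm M\Vert_{\rm F}$ over $\bm M\in\mathcal{M}_\epsilon$.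
   Context: $\mathcal{S}^N$: real symmetric $N\times N$ matrices; $\mathcal{D}_N$: real $N\times N$ diagonal matrices; ${\rm O}(N)$: $N\times N$ orthogonal matrices; $\Vert\cdot\Vert_2$: spectral norm; $\Vert\cdot\Vert_{\rm F}$: Frobenius norm; non-increasing diagonal means $[\bm\Lambda]_{ii}\ge[\bm\Lambda]_{jj}$ for $i<j$. *)

theory Defs
  imports "HOL-Analysis.Analysis"
begin

text \<open>N x N real matrices are rendered as real^'n^'n with a finite, well-ordered index
type 'n (the order is needed to speak of non-increasing diagonals).\<close>

definition frob_norm :: "real^'n^'m \<Rightarrow> real" where
  "frob_norm A = sqrt (\<Sum>i\<in>UNIV. \<Sum>j\<in>UNIV. (A $ i $ j)^2)"

definition spec_norm :: "real^'n^'m \<Rightarrow> real" where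
  "spec_norm A = onorm (\<lambda>x. A *v x)"

definition diag_mat :: "real^'n^'n \<Rightarrow> bool" where
  "diag_mat A \<longleftrightarrow> (\<forall>i j. i \<noteq> j \<longrightarrow> A $ i $ j = 0)"

definition nonincr_diag :: "real^('n::{finite,linorder})^('n::{finite,linorder}) \<Rightarrow> bool" where
  "nonincr_diag A \<longleftrightarrow> (\<forall>i j. i < j \<longrightarrow> A $ j $ j \<le> A $ i $ i)"

definition symmetric_mat :: "real^'n^'n \<Rightarrow> bool" where
  "symmetric_mat A \<longleftrightarrow> transpose A = A"

definition M_eps :: "real^'n^'n \<Rightarrow> real \<Rightarrow> (real^'n^'n) set" where
  "M_eps Lo eps = {V ** (Lo + Le) ** transpose V | V Le.
       orthogonal_matrix V \<and> diag_mat Le \<and> spec_norm Le \<le> eps}"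

end

theory Submission
  imports Defs
begin

text \<open>
  Conjugating by Q reduces everything to the diagonal case: for M = V (Lo + Le) V^T one has
  ||S - M||_F = ||Lam - W D W^T||_F with W = Q^T V orthogonal and D = Lo + Le diagonal. The squared
  entries of W form a doubly stochastic matrix, so by Abel summation the cross term
  tr (Lam W D W^T) is at most the sum of lam_i d_(sigma i), where d_(sigma 1) >= d_(sigma 2) >= ...
  is the sorted diagonal of D; hence ||Lam - W D W^T||_F >= ||Lam - D_sorted||_F
  (the diagonal Hoffman-Wielandt inequality). Sorting is 1-Lipschitz in the sup norm against the
  already sorted diagonal of Lo, so D_sorted - Lo is again an admissible perturbation, and the
  minimality of Le_star finishes the proof.
\<close>

lemma abel_summation_le:
  fixes lam x y :: "'n::linorder \<Rightarrow> real"
  assumes "finite A"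
    and "\<forall>i\<in>A. \<forall>j\<in>A. i < j \<longrightarrow> lam j \<le> lam i"
    and "\<forall>i\<in>A. 0 \<le> lam i"
    and "\<forall>k\<in>A. (\<Sum>i\<in>A \<inter> {..k}. x i) \<le> (\<Sum>i\<in>A \<inter> {..k}. y i)"
  shows "(\<Sum>i\<in>A. lam i * x i) \<le> (\<Sum>i\<in>A. lam i * y i)"
  using assms
proof (induction "card A" arbitrary: A lam)
  case 0
  then show ?case by simp
next
  case (Suc n)
  define m where "m = Max A"
  define A' where "A' = A - {m}"
  have "A \<noteq> {}" using Suc.hyps(2) by auto
  then have mA: "m \<in> A" and m_max: "\<forall>i\<in>A. i \<le> m" using Suc.prems(1) by (simp_all add: m_def)
  have A: "A = insert m A'" "m \<notin> A'" "finite A'" using mA Suc.prems(1) by (auto simp: A'_def)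
  have below_m: "i < m" if "i \<in> A'" for i
    using m_max that by (auto simp: A'_def less_le)
  have IH: "(\<Sum>i\<in>A'. (lam i - lam m) * x i) \<le> (\<Sum>i\<in>A'. (lam i - lam m) * y i)"
  proof (rule Suc.hyps(1))
    show "\<forall>k\<in>A'. (\<Sum>i\<in>A' \<inter> {..k}. x i) \<le> (\<Sum>i\<in>A' \<inter> {..k}. y i)"
    proof
      fix k assume "k \<in> A'"
      then have "A' \<inter> {..k} = A \<inter> {..k}" using below_m[of k] by (auto simp: A'_def)
      then show "(\<Sum>i\<in>A' \<inter> {..k}. x i) \<le> (\<Sum>i\<in>A' \<inter> {..k}. y i)"
        using Suc.prems(4) \<open>k \<in> A'\<close> by (simp add: A'_def)
    qed
    show "\<forall>i\<in>A'. \<forall>j\<in>A'. i < j \<longrightarrow> lam j - lam m \<le> lam i - lam m"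
      using Suc.prems(2) by (simp add: A'_def)
    show "\<forall>i\<in>A'. 0 \<le> lam i - lam m"
      using Suc.prems(2) mA below_m by (simp add: A'_def)
  qed (use Suc.hyps(2) A in simp_all)
  have "A \<inter> {..m} = A" using m_max by auto
  then have "(\<Sum>i\<in>A. x i) \<le> (\<Sum>i\<in>A. y i)" using Suc.prems(4) mA by metis
  then have "lam m * (\<Sum>i\<in>A. x i) \<le> lam m * (\<Sum>i\<in>A. y i)"
    using Suc.prems(3) mA by (simp add: mult_left_mono)
  moreover have split: "(\<Sum>i\<in>A. lam i * z i) = (\<Sum>i\<in>A'. (lam i - lam m) * z i) + lam m * (\<Sum>i\<in>A. z i)"
    for z :: "'n \<Rightarrow> real"
    unfolding A(1) using A(2,3)
    by (simp add: left_diff_distrib sum_subtractf sum_distrib_left distrib_left)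
  ultimately show ?case using IH split[of x] split[of y] by linarith
qed

lemma abel_summation_le_UNIV:
  fixes lam x y :: "'n::{finite,linorder} \<Rightarrow> real"
  assumes "\<forall>i j. i < j \<longrightarrow> lam j \<le> lam i"
    and "\<forall>k. (\<Sum>i\<in>{..k}. x i) \<le> (\<Sum>i\<in>{..k}. y i)"
    and "(\<Sum>i\<in>UNIV. x i) = (\<Sum>i\<in>UNIV. y i)"
  shows "(\<Sum>i\<in>UNIV. lam i * x i) \<le> (\<Sum>i\<in>UNIV. lam i * y i)"
proof -
  define c where "c = Min (range lam)"
  have "c \<le> lam i" for i unfolding c_def by (rule Min_le) auto
  then have "(\<Sum>i\<in>UNIV. (lam i - c) * x i) \<le> (\<Sum>i\<in>UNIV. (lam i - c) * y i)"
    by (intro abel_summation_le) (use assms(1,2) in simp_all)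
  moreover have split: "(\<Sum>i\<in>UNIV. lam i * z i) = (\<Sum>i\<in>UNIV. (lam i - c) * z i) + c * (\<Sum>i\<in>UNIV. z i)"
    for z :: "'n \<Rightarrow> real"
    by (simp add: left_diff_distrib sum_subtractf sum_distrib_left)
  ultimately show ?thesis using split[of x] split[of y] by (simp add: assms(3))
qed

lemma weighted_sum_le_prefix_sum:
  fixes w e :: "'n::{finite,linorder} \<Rightarrow> real"
  assumes "\<forall>j. 0 \<le> w j \<and> w j \<le> 1"
    and "(\<Sum>j\<in>UNIV. w j) = card {..k}"
    and "\<forall>i j. i < j \<longrightarrow> e j \<le> e i"
  shows "(\<Sum>j\<in>UNIV. w j * e j) \<le> (\<Sum>j\<in>{..k}. e j)"
proof -
  define ind where "ind j = (if j \<le> k then 1 else 0 :: real)" for j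
  have prefix_sum: "(\<Sum>j\<in>{..k}. f j) = (\<Sum>j\<in>UNIV. ind j * f j)" for f :: "'n \<Rightarrow> real"
  proof -
    have "(\<Sum>j\<in>UNIV. ind j * f j) = (\<Sum>j\<in>UNIV. if j \<in> {..k} then f j else 0)"
      by (rule sum.cong) (simp_all add: ind_def)
    then show ?thesis using sum.inter_restrict[of UNIV f "{..k}"] by simp
  qed
  have "(\<Sum>j\<in>UNIV. (w j - ind j) * e j) \<le> (\<Sum>j\<in>UNIV. (w j - ind j) * e k)"
  proof (rule sum_mono)
    fix j
    show "(w j - ind j) * e j \<le> (w j - ind j) * e k"
    proof (cases "j \<le> k")
      case True
      then have "e k \<le> e j" using assms(3) by (cases "j = k") auto
      then show ?thesis using True assms(1) by (simp add: ind_def mult_left_mono_neg)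
    next
      case False
      then have "e j \<le> e k" using assms(3) by auto
      then show ?thesis using False assms(1) by (simp add: ind_def mult_left_mono)
    qed
  qed
  also have "\<dots> = ((\<Sum>j\<in>UNIV. w j) - (\<Sum>j\<in>UNIV. ind j)) * e k"
    by (simp add: sum_distrib_right[symmetric] sum_subtractf)
  also have "\<dots> = 0" using assms(2) prefix_sum[of "\<lambda>_. 1"] by simp
  finally show ?thesis
    by (simp add: prefix_sum left_diff_distrib sum_subtractf)
qed

lemma doubly_stochastic_rearrangement:
  fixes lam e :: "'n::{finite,linorder} \<Rightarrow> real" and P :: "'n \<Rightarrow> 'n \<Rightarrow> real"
  assumes "\<forall>i j. i < j \<longrightarrow> lam j \<le> lam i" and e_sorted: "\<forall>i j. i < j \<longrightarrow> e j \<le> e i"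
    and P_nonneg: "\<forall>i j. 0 \<le> P i j"
    and rows: "\<forall>i. (\<Sum>j\<in>UNIV. P i j) = 1" and cols: "\<forall>j. (\<Sum>i\<in>UNIV. P i j) = 1"
  shows "(\<Sum>i\<in>UNIV. \<Sum>j\<in>UNIV. P i j * lam i * e j) \<le> (\<Sum>i\<in>UNIV. lam i * e i)"
proof -
  define c where "c i = (\<Sum>j\<in>UNIV. P i j * e j)" for i
  have swap: "(\<Sum>i\<in>K. c i) = (\<Sum>j\<in>UNIV. (\<Sum>i\<in>K. P i j) * e j)" for K
    unfolding c_def by (simp add: sum_distrib_right sum.swap[of _ _ UNIV])
  have "(\<Sum>i\<in>{..k}. c i) \<le> (\<Sum>i\<in>{..k}. e i)" for k
  proof -
    have "(\<Sum>j\<in>UNIV. (\<Sum>i\<in>{..k}. P i j) * e j) \<le> (\<Sum>i\<in>{..k}. e i)"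
    proof (rule weighted_sum_le_prefix_sum[OF _ _ e_sorted])
      show "\<forall>j. 0 \<le> (\<Sum>i\<in>{..k}. P i j) \<and> (\<Sum>i\<in>{..k}. P i j) \<le> 1"
        using P_nonneg cols sum_mono2[of UNIV "{..k}" "\<lambda>i. P i _"] by (simp add: sum_nonneg)
      show "(\<Sum>j\<in>UNIV. \<Sum>i\<in>{..k}. P i j) = card {..k}"
        using rows by (subst sum.swap) simp
    qed
    then show ?thesis by (simp add: swap)
  qed
  moreover have "(\<Sum>i\<in>UNIV. c i) = (\<Sum>i\<in>UNIV. e i)"
    using swap[of UNIV] cols by simp
  ultimately have "(\<Sum>i\<in>UNIV. lam i * c i) \<le> (\<Sum>i\<in>UNIV. lam i * e i)"
    using abel_summation_le_UNIV assms(1) by blast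
  then show ?thesis by (simp add: c_def sum_distrib_left mult_ac)
qed

lemma ex_sorting_bij_betw:
  fixes f :: "'b \<Rightarrow> real" and A :: "'a::linorder set"
  assumes "finite A" "finite B" "card A = card B"
  shows "\<exists>\<sigma>. bij_betw \<sigma> A B \<and> (\<forall>i\<in>A. \<forall>j\<in>A. i < j \<longrightarrow> f (\<sigma> j) \<le> f (\<sigma> i))"
  using assms
proof (induction "card A" arbitrary: A B)
  case 0
  then show ?case by (auto simp: bij_betw_def)
next
  case (Suc n)
  define m where "m = Max A"
  have "A \<noteq> {}" "B \<noteq> {}" using Suc.hyps(2) Suc.prems(3) by auto
  then have mA: "m \<in> A" and m_max: "\<forall>i\<in>A. i \<le> m"
    using Suc.prems(1) by (simp_all add: m_def)
  obtain b where bB: "b \<in> B" and b_min: "\<forall>b'\<in>B. f b \<le> f b'"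
    using Suc.prems(2) \<open>B \<noteq> {}\<close> by (metis arg_min_if_finite(1,2) not_le)
  obtain \<sigma> where \<sigma>: "bij_betw \<sigma> (A - {m}) (B - {b})"
    and \<sigma>_sorted: "\<forall>i\<in>A - {m}. \<forall>j\<in>A - {m}. i < j \<longrightarrow> f (\<sigma> j) \<le> f (\<sigma> i)"
    using Suc.hyps(1)[of "A - {m}" "B - {b}"] Suc.hyps(2) Suc.prems mA bB by fastforce
  define \<tau> where "\<tau> x = (if x \<in> A - {m} then \<sigma> x else b)" for x
  have "bij_betw \<tau> ((A - {m}) \<union> {m}) ((B - {b}) \<union> {b})"
    unfolding \<tau>_def by (rule bij_betw_disjoint_Un[OF \<sigma>]) auto
  then have "bij_betw \<tau> A B" using mA bB by (simp add: insert_absorb)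
  moreover have "f (\<tau> j) \<le> f (\<tau> i)" if "i \<in> A" "j \<in> A" "i < j" for i j
  proof -
    have "i \<noteq> m" using m_max that by force
    moreover have "\<sigma> i \<in> B" using \<sigma> \<open>i \<in> A\<close> \<open>i \<noteq> m\<close> by (auto simp: bij_betw_def)
    ultimately show ?thesis using that \<sigma>_sorted b_min by (auto simp: \<tau>_def)
  qed
  ultimately show ?case by blast
qed

lemma inj_ex_le_image_ge:
  fixes \<sigma> :: "'n::{finite,linorder} \<Rightarrow> 'n"
  assumes "inj \<sigma>"
  shows "\<exists>i\<le>k. k \<le> \<sigma> i"
proof (rule ccontr)
  assume "\<not> ?thesis"
  then have "\<sigma> ` {..k} \<subseteq> {..<k}" by (auto simp flip: not_le)
  then have "card (\<sigma> ` {..k}) \<le> card {..<k}" by (simp add: card_mono)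
  moreover have "card (\<sigma> ` {..k}) = card {..k}" using assms by (simp add: card_image inj_on_subset)
  moreover have "{..k} = insert k {..<k}" by auto
  ultimately show False by simp
qed

lemma inj_ex_ge_image_le:
  fixes \<sigma> :: "'n::{finite,linorder} \<Rightarrow> 'n"
  assumes "inj \<sigma>"
  shows "\<exists>i\<ge>k. \<sigma> i \<le> k"
proof (rule ccontr)
  assume "\<not> ?thesis"
  then have "\<sigma> ` {k..} \<subseteq> {k<..}" by (auto simp flip: not_le)
  then have "card (\<sigma> ` {k..}) \<le> card {k<..}" by (simp add: card_mono)
  moreover have "card (\<sigma> ` {k..}) = card {k..}" using assms by (simp add: card_image inj_on_subset)
  moreover have "{k..} = insert k {k<..}" by auto
  ultimately show False by simp
qed

lemma sorted_rearrangement_dist_le: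
  fixes d lo :: "'n::{finite,linorder} \<Rightarrow> real"
  assumes "bij \<sigma>" "\<forall>i j. i < j \<longrightarrow> d (\<sigma> j) \<le> d (\<sigma> i)"
    and "\<forall>i j. i < j \<longrightarrow> lo j \<le> lo i" and "\<forall>j. \<bar>d j - lo j\<bar> \<le> eps"
  shows "\<bar>d (\<sigma> k) - lo k\<bar> \<le> eps"
proof -
  have d_mono: "d (\<sigma> j) \<le> d (\<sigma> i)" and lo_mono: "lo j \<le> lo i" if "i \<le> j" for i j
    using assms(2,3) that by (metis order.order_iff_strict order_refl)+
  obtain i where i: "i \<le> k" "k \<le> \<sigma> i" using inj_ex_le_image_ge assms(1) bij_is_inj by blast
  obtain j where j: "k \<le> j" "\<sigma> j \<le> k" using inj_ex_ge_image_le assms(1) bij_is_inj by blast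
  have "d (\<sigma> k) \<le> d (\<sigma> i)" "lo (\<sigma> i) \<le> lo k" "d (\<sigma> j) \<le> d (\<sigma> k)" "lo k \<le> lo (\<sigma> j)"
    using d_mono lo_mono i j by auto
  moreover have "\<bar>d (\<sigma> i) - lo (\<sigma> i)\<bar> \<le> eps" "\<bar>d (\<sigma> j) - lo (\<sigma> j)\<bar> \<le> eps"
    using assms(4) by blast+
  ultimately show ?thesis by linarith
qed

definition frob_sq :: "real^'n^'m \<Rightarrow> real" where
  "frob_sq A = (\<Sum>i\<in>UNIV. \<Sum>j\<in>UNIV. (A $ i $ j)^2)"

lemma frob_norm_eq_sqrt_frob_sq: "frob_norm A = sqrt (frob_sq A)"
  by (simp add: frob_norm_def frob_sq_def)

lemma norm_power2_vec: "(norm (x::real^'n))^2 = (\<Sum>i\<in>UNIV. (x $ i)^2)"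
  by (simp add: norm_eq_sqrt_inner inner_vec_def power2_eq_square sum_nonneg)

lemma frob_sq_eq_sum_column_norms: "frob_sq (A::real^'n^'m) = (\<Sum>j\<in>UNIV. (norm (column j A))^2)"
  unfolding frob_sq_def norm_power2_vec column_def by (simp, rule sum.swap)

lemma frob_sq_transpose: "frob_sq (transpose A) = frob_sq A"
  unfolding frob_sq_def transpose_def by (simp, rule sum.swap)

lemma frob_sq_orthogonal_mult:
  assumes "orthogonal_matrix (Q::real^'n^'n)"
  shows "frob_sq (Q ** X) = frob_sq X"
proof -
  have "column j (Q ** X) = Q *v column j X" for j
    by (simp add: column_def matrix_matrix_mult_def matrix_vector_mult_def vec_eq_iff)
  moreover have "norm (Q *v x) = norm x" for x
    using assms orthogonal_transformation_matrix orthogonal_transformation_norm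
      matrix_of_matrix_vector_mul matrix_vector_mul_linear by metis
  ultimately show ?thesis by (simp add: frob_sq_eq_sum_column_norms)
qed

lemma frob_sq_orthogonal_conj:
  assumes "orthogonal_matrix (Q::real^'n^'n)"
  shows "frob_sq (Q ** X ** transpose Q) = frob_sq X"
  using assms frob_sq_orthogonal_mult frob_sq_transpose
  by (metis matrix_transpose_mul orthogonal_matrix_transpose transpose_transpose)

lemma matrix_mult_diff_ldistrib: "(A::real^'n^'m) ** (B - C) = A ** B - A ** C"
  by (simp add: vec_eq_iff matrix_matrix_mult_def sum_subtractf right_diff_distrib)

lemma matrix_mult_diff_rdistrib: "((B::real^'n^'m) - C) ** A = B ** A - C ** A"
  by (simp add: vec_eq_iff matrix_matrix_mult_def sum_subtractf left_diff_distrib)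

lemma matrix_conj_diff:
  "(Q::real^'n^'n) ** X ** transpose Q - Q ** Y ** transpose Q = Q ** (X - Y) ** transpose Q"
  by (simp add: matrix_mult_diff_ldistrib matrix_mult_diff_rdistrib)

lemma orthogonal_matrix_row_sum_power2:
  "orthogonal_matrix (W::real^'n^'n) \<Longrightarrow> (\<Sum>k\<in>UNIV. (W $ i $ k)^2) = 1"
  using orthogonal_matrix_orthonormal_rows[of W] norm_power2_vec[of "row i W"]
  by (simp add: row_def)

lemma orthogonal_matrix_column_sum_power2:
  "orthogonal_matrix (W::real^'n^'n) \<Longrightarrow> (\<Sum>i\<in>UNIV. (W $ i $ k)^2) = 1"
  using orthogonal_matrix_orthonormal_columns[of W] norm_power2_vec[of "column k W"]
  by (simp add: column_def)

lemma sum_UNIV_eq_single: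
  assumes "\<And>j. j \<noteq> i \<Longrightarrow> f j = (0::real)"
  shows "(\<Sum>j\<in>(UNIV::'n::finite set). f j) = f i"
  using assms by (simp add: sum.neutral sum.remove[of UNIV i])

lemma matrix_mult_diag_nth:
  "diag_mat D \<Longrightarrow> ((W::real^'n^'m) ** D) $ i $ l = W $ i $ l * D $ l $ l"
  unfolding matrix_matrix_mult_def by (simp, rule sum_UNIV_eq_single) (simp add: diag_mat_def)

lemma frob_sq_diag: "diag_mat A \<Longrightarrow> frob_sq A = (\<Sum>i\<in>UNIV. (A $ i $ i)^2)"
  unfolding frob_sq_def by (intro sum.cong refl sum_UNIV_eq_single) (simp add: diag_mat_def)

lemma frob_sq_diag_diff:
  assumes "diag_mat A"
  shows "frob_sq (A - B) = frob_sq A + frob_sq B - 2 * (\<Sum>i\<in>UNIV. A $ i $ i * B $ i $ i)"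
proof -
  have "((A - B) $ i $ j)^2 = (A $ i $ j)^2 + (B $ i $ j)^2 - 2 * (A $ i $ j * B $ i $ j)" for i j
    by (simp add: power2_diff)
  then have "frob_sq (A - B) = frob_sq A + frob_sq B - 2 * (\<Sum>i\<in>UNIV. \<Sum>j\<in>UNIV. A $ i $ j * B $ i $ j)"
    unfolding frob_sq_def by (simp only: sum_subtractf sum.distrib sum_distrib_left)
  moreover have "(\<Sum>j\<in>UNIV. A $ i $ j * B $ i $ j) = A $ i $ i * B $ i $ i" for i
    by (rule sum_UNIV_eq_single) (use assms in \<open>simp add: diag_mat_def\<close>)
  ultimately show ?thesis by simp
qed

lemma diag_orthogonal_conj_nth:
  "diag_mat D \<Longrightarrow> ((W::real^'n^'n) ** D ** transpose W) $ i $ i = (\<Sum>k\<in>UNIV. (W $ i $ k)^2 * D $ k $ k)"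
  by (simp add: matrix_matrix_mult_def[of "W ** D"] matrix_mult_diag_nth transpose_def
      power2_eq_square mult_ac)

lemma abs_diag_le_spec_norm: "\<bar>(A::real^'n^'n) $ k $ k\<bar> \<le> spec_norm A"
  unfolding spec_norm_def by (rule matrix_component_le_onorm)

lemma spec_norm_diag_le:
  assumes "diag_mat (A::real^'n^'n)" "\<forall>k. \<bar>A $ k $ k\<bar> \<le> eps"
  shows "spec_norm A \<le> eps"
  unfolding spec_norm_def
proof (rule onorm_le)
  fix x :: "real^'n"
  have "0 \<le> eps" using assms(2) abs_ge_zero order_trans by blast
  have Ax: "(A *v x) $ i = A $ i $ i * x $ i" for i
    unfolding matrix_vector_mult_def
    by (simp, rule sum_UNIV_eq_single) (use assms(1) in \<open>simp add: diag_mat_def\<close>)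
  have "(norm (A *v x))^2 = (\<Sum>i\<in>UNIV. (A $ i $ i * x $ i)^2)"
    by (simp add: norm_power2_vec Ax)
  also have "\<dots> \<le> (\<Sum>i\<in>UNIV. eps^2 * (x $ i)^2)"
  proof (rule sum_mono)
    fix i
    have "(A $ i $ i)^2 \<le> eps^2"
      using assms(2) \<open>0 \<le> eps\<close> by (metis abs_le_square_iff abs_of_nonneg)
    then show "(A $ i $ i * x $ i)^2 \<le> eps^2 * (x $ i)^2"
      by (simp add: power_mult_distrib mult_right_mono)
  qed
  also have "\<dots> = (eps * norm x)^2"
    by (simp add: power_mult_distrib norm_power2_vec sum_distrib_left)
  finally show "norm (A *v x) \<le> eps * norm x"
    using \<open>0 \<le> eps\<close> by (meson norm_ge_zero power2_le_imp_le zero_le_mult_iff)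
qed

lemma hoffman_wielandt_diag:
  fixes Lam D W :: "real^('n::{finite,linorder})^('n::{finite,linorder})"
  assumes "diag_mat Lam" "nonincr_diag Lam" "diag_mat D" "orthogonal_matrix W"
    and \<sigma>: "bij \<sigma>" and D_sorted: "\<forall>i j. i < j \<longrightarrow> D $ \<sigma> j $ \<sigma> j \<le> D $ \<sigma> i $ \<sigma> i"
  shows "(\<Sum>i\<in>UNIV. (Lam $ i $ i - D $ \<sigma> i $ \<sigma> i)^2) \<le> frob_sq (Lam - W ** D ** transpose W)"
proof -
  define lam where "lam i = Lam $ i $ i" for i
  define e where "e m = D $ \<sigma> m $ \<sigma> m" for m
  define P where "P i m = (W $ i $ \<sigma> m)^2" for i m
  have reindex: "(\<Sum>m\<in>UNIV. f (\<sigma> m)) = (\<Sum>k\<in>UNIV. f k)" for f :: "'n \<Rightarrow> real"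
    using \<sigma> by (simp add: sum.reindex_bij_betw)
  have "(\<Sum>i\<in>UNIV. \<Sum>m\<in>UNIV. P i m * lam i * e m) \<le> (\<Sum>i\<in>UNIV. lam i * e i)"
  proof (rule doubly_stochastic_rearrangement)
    show "\<forall>i j. i < j \<longrightarrow> lam j \<le> lam i" using assms(2) by (simp add: nonincr_diag_def lam_def)
    show "\<forall>i j. i < j \<longrightarrow> e j \<le> e i" using D_sorted by (simp add: e_def)
    show "\<forall>i. (\<Sum>m\<in>UNIV. P i m) = 1"
      using reindex[of "\<lambda>k. (W $ _ $ k)^2"] orthogonal_matrix_row_sum_power2[OF assms(4)]
      by (simp add: P_def)
    show "\<forall>m. (\<Sum>i\<in>UNIV. P i m) = 1"
      using orthogonal_matrix_column_sum_power2[OF assms(4)] by (simp add: P_def)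
  qed (simp add: P_def)
  moreover have "(\<Sum>m\<in>UNIV. P i m * lam i * e m) = lam i * (W ** D ** transpose W) $ i $ i" for i
    unfolding diag_orthogonal_conj_nth[OF assms(3)] P_def e_def
    using reindex[of "\<lambda>k. (W $ i $ k)^2 * D $ k $ k"] by (simp add: mult_ac flip: sum_distrib_left)
  moreover have "frob_sq (W ** D ** transpose W) = (\<Sum>i\<in>UNIV. (e i)^2)"
    using frob_sq_orthogonal_conj[OF assms(4)] frob_sq_diag[OF assms(3)]
      reindex[of "\<lambda>k. (D $ k $ k)^2"] by (simp add: e_def)
  moreover have "(\<Sum>i\<in>UNIV. (lam i - e i)^2)
      = frob_sq Lam + (\<Sum>i\<in>UNIV. (e i)^2) - 2 * (\<Sum>i\<in>UNIV. lam i * e i)"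
    by (simp add: frob_sq_diag[OF assms(1)] lam_def power2_diff sum_subtractf sum.distrib
        sum_distrib_left mult.assoc)
  ultimately show ?thesis
    using frob_sq_diag_diff[OF assms(1), of "W ** D ** transpose W"] by (simp add: lam_def e_def)
qed

lemma M_eps_frob_dist_ge_diag:
  fixes Q Lam Lo M :: "real^('n::{finite,linorder})^('n::{finite,linorder})"
  assumes "orthogonal_matrix Q" "diag_mat Lam" "nonincr_diag Lam" "diag_mat Lo" "nonincr_diag Lo"
    and "M \<in> M_eps Lo eps"
  obtains Le where "diag_mat Le" "spec_norm Le \<le> eps"
    "frob_norm (Lam - Lo - Le) \<le> frob_norm (Q ** Lam ** transpose Q - M)"
proof -
  obtain V Le where M: "M = V ** (Lo + Le) ** transpose V" and "orthogonal_matrix V"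
    and "diag_mat Le" and "spec_norm Le \<le> eps"
    using assms(6) unfolding M_eps_def by blast
  define D where "D = Lo + Le"
  define W where "W = transpose Q ** V"
  have "diag_mat D" using assms(4) \<open>diag_mat Le\<close> by (simp add: D_def diag_mat_def)
  have "orthogonal_matrix W"
    using assms(1) \<open>orthogonal_matrix V\<close> by (simp add: W_def orthogonal_matrix_mul)
  have "Q ** (W ** D ** transpose W) ** transpose Q
      = (Q ** transpose Q) ** V ** D ** transpose V ** (Q ** transpose Q)"
    by (simp add: W_def matrix_transpose_mul matrix_mul_assoc)
  then have "Q ** (W ** D ** transpose W) ** transpose Q = M"
    using assms(1) by (simp add: M D_def orthogonal_matrix_def)
  then have dist: "frob_sq (Q ** Lam ** transpose Q - M) = frob_sq (Lam - W ** D ** transpose W)"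
    by (metis matrix_conj_diff frob_sq_orthogonal_conj[OF assms(1)])
  obtain \<sigma> :: "'n \<Rightarrow> 'n" where "bij \<sigma>" and D_sorted: "\<forall>i j. i < j \<longrightarrow> D $ \<sigma> j $ \<sigma> j \<le> D $ \<sigma> i $ \<sigma> i"
    using ex_sorting_bij_betw[of "UNIV :: 'n set" UNIV "\<lambda>k. D $ k $ k"] by auto
  define Le' where "Le' = (\<chi> i j. if i = j then D $ \<sigma> i $ \<sigma> i - Lo $ i $ i else 0)"
  show ?thesis
  proof (rule that)
    show "diag_mat Le'" by (simp add: Le'_def diag_mat_def)
    have "\<bar>D $ \<sigma> k $ \<sigma> k - Lo $ k $ k\<bar> \<le> eps" for k
    proof (rule sorted_rearrangement_dist_le[OF \<open>bij \<sigma>\<close> D_sorted])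
      show "\<forall>i j. i < j \<longrightarrow> Lo $ j $ j \<le> Lo $ i $ i" using assms(5) by (simp add: nonincr_diag_def)
      show "\<forall>j. \<bar>D $ j $ j - Lo $ j $ j\<bar> \<le> eps"
        using abs_diag_le_spec_norm[of Le] \<open>spec_norm Le \<le> eps\<close> by (auto simp: D_def intro: order_trans)
    qed
    then show "spec_norm Le' \<le> eps"
      by (intro spec_norm_diag_le) (simp_all add: Le'_def diag_mat_def)
    have "diag_mat (Lam - Lo - Le')" using assms(2,4) by (simp add: Le'_def diag_mat_def)
    then have "frob_sq (Lam - Lo - Le') = (\<Sum>i\<in>UNIV. (Lam $ i $ i - D $ \<sigma> i $ \<sigma> i)^2)"
      by (simp add: frob_sq_diag Le'_def)
    also have "\<dots> \<le> frob_sq (Q ** Lam ** transpose Q - M)"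
      unfolding dist using assms(2,3) \<open>diag_mat D\<close> \<open>orthogonal_matrix W\<close> \<open>bij \<sigma>\<close> D_sorted
      by (rule hoffman_wielandt_diag)
    finally show "frob_norm (Lam - Lo - Le') \<le> frob_norm (Q ** Lam ** transpose Q - M)"
      by (simp add: frob_norm_eq_sqrt_frob_sq)
  qed
qed

theorem theorem4:
  fixes S Q Lam Lo Le_star :: "real^('n::{finite,wellorder})^('n::{finite,wellorder})" and eps :: real
  assumes "symmetric_mat S"
    and "orthogonal_matrix Q" and "diag_mat Lam" and "nonincr_diag Lam"
    and "S = Q ** Lam ** transpose Q"
    and "diag_mat Lo" and "nonincr_diag Lo"
    and "0 \<le> eps"
    and "diag_mat Le_star" and "spec_norm Le_star \<le> eps"
    and "\<forall>Le. diag_mat Le \<and> spec_norm Le \<le> eps \<longrightarrow>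
           frob_norm (Lam - Lo - Le_star) \<le> frob_norm (Lam - Lo - Le)"
  shows "Q ** (Lo + Le_star) ** transpose Q \<in> M_eps Lo eps \<and>
         (\<forall>M \<in> M_eps Lo eps. frob_norm (S - Q ** (Lo + Le_star) ** transpose Q) \<le> frob_norm (S - M))"
  \<comment> \<open>Symmetry of S and 0 \<le> eps are implied by the other hypotheses and not used.\<close>
proof
  show "Q ** (Lo + Le_star) ** transpose Q \<in> M_eps Lo eps"
    unfolding M_eps_def using assms(2,9,10) by blast
  have "S - Q ** (Lo + Le_star) ** transpose Q = Q ** (Lam - Lo - Le_star) ** transpose Q"
    by (simp add: assms(5) matrix_conj_diff diff_diff_eq)
  then have attained: "frob_norm (S - Q ** (Lo + Le_star) ** transpose Q) = frob_norm (Lam - Lo - Le_star)"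
    by (simp add: frob_norm_eq_sqrt_frob_sq frob_sq_orthogonal_conj assms(2))
  show "\<forall>M \<in> M_eps Lo eps. frob_norm (S - Q ** (Lo + Le_star) ** transpose Q) \<le> frob_norm (S - M)"
  proof
    fix M assume "M \<in> M_eps Lo eps"
    then obtain Le where "diag_mat Le" "spec_norm Le \<le> eps"
      and "frob_norm (Lam - Lo - Le) \<le> frob_norm (S - M)"
      using M_eps_frob_dist_ge_diag assms(2-7) by metis
    then show "frob_norm (S - Q ** (Lo + Le_star) ** transpose Q) \<le> frob_norm (S - M)"
      using attained assms(11) by force
  qed
qed

end
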